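(* Let $P(q)=\sum_{j=0}^n q^ja_j$ be a slice regular polynomial of degree $n\ge1$ with quaternionic coefficients such that $P(1)=\|P\|=1$, where $\|P\|=\max_{|q|\le1}|P(q)|$, and suppose there is a real number $\delta>1$ such that $$\max_{|q|=R}|P(q)|\leq\frac{1+R^{n}}{2}\qquad\text{for all }1<R<\delta.$$ Then $P$ does not have all its zeros within the open unit ball $\mathbb B=\{q\in\mathbb H:|q|<1\}$, i.e. $P$ has a zero $q_0$ with $|q_0|\ge1$.
   Context: $\mathbb H$ denotes the quaternions with modulus $|q|=\sqrt{q\bar q}$. A slice regular polynomial of degree $n$ is a function $q\mapsto\sum_{j=0}^n q^ja_j$ with coefficients $a_j\in\mathbb H$ on the right and $a_n\neq0$; its zeros are the points $q\in\mathbb H$ with $P(q)=0$. *)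

theory Defs
  imports Complex_Main
begin

datatype quat = Quat (Re: real) (Im1: real) (Im2: real) (Im3: real)

definition qzero :: quat where "qzero = Quat 0 0 0 0"
definition qone :: quat where "qone = Quat 1 0 0 0"

definition qadd :: "quat \<Rightarrow> quat \<Rightarrow> quat" where
  "qadd p q = Quat (Re p + Re q) (Im1 p + Im1 q) (Im2 p + Im2 q) (Im3 p + Im3 q)"

definition qmul :: "quat \<Rightarrow> quat \<Rightarrow> quat" where
  "qmul p q = Quat
     (Re p * Re q - Im1 p * Im1 q - Im2 p * Im2 q - Im3 p * Im3 q)
     (Re p * Im1 q + Im1 p * Re q + Im2 p * Im3 q - Im3 p * Im2 q)
     (Re p * Im2 q - Im1 p * Im3 q + Im2 p * Re q + Im3 p * Im1 q)
     (Re p * Im3 q + Im1 p * Im2 q - Im2 p * Im1 q + Im3 p * Re q)"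

definition qnorm :: "quat \<Rightarrow> real" where
  "qnorm q = sqrt ((Re q)^2 + (Im1 q)^2 + (Im2 q)^2 + (Im3 q)^2)"

fun qpow :: "quat \<Rightarrow> nat \<Rightarrow> quat" where
  "qpow q 0 = qone"
| "qpow q (Suc k) = qmul (qpow q k) q"

fun qpoly_aux :: "(nat \<Rightarrow> quat) \<Rightarrow> nat \<Rightarrow> quat \<Rightarrow> quat" where
  "qpoly_aux a 0 q = qmul (qpow q 0) (a 0)"
| "qpoly_aux a (Suc k) q = qadd (qpoly_aux a k q) (qmul (qpow q (Suc k)) (a (Suc k)))"

definition qpoly :: "(nat \<Rightarrow> quat) \<Rightarrow> nat \<Rightarrow> quat \<Rightarrow> quat" where
  "qpoly a n q = qpoly_aux a n q"

end

theory Submission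
  imports Defs "HOL-Analysis.Analysis" "HOL-Computational_Algebra.Fundamental_Theorem_Algebra"
begin

text \<open>
  Let \<open>S\<close> be the symmetrization of \<open>P\<close>: the polynomial \<open>\<Sum>\<^sub>j\<^sub>,\<^sub>k \<langle>a\<^sub>j, a\<^sub>k\<rangle> z\<^bsup>j+k\<^esup>\<close> with real
  coefficients, of degree \<open>2n\<close>, with \<open>S(x) = |P(x)|\<^sup>2\<close> for real \<open>x\<close>. On a 2-sphere
  \<open>{Re q = u, |q|\<^sup>2 = r}\<close> every quaternion satisfies \<open>q\<^sup>2 = 2uq - r\<close>, so \<open>P(q) = A + qB\<close> with
  \<open>A, B\<close> fixed; this shows that every zero \<open>z\<close> of \<open>S\<close> yields a zero of \<open>P\<close> of modulus \<open>|z|\<close>.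
  So if all zeros of \<open>P\<close> lay in the open unit ball, all zeros of \<open>S\<close> would lie in the
  open unit disc, where \<open>Re (1/(1 - z)) > 1/2\<close>; multiplying over the roots and using \<open>S(1) = 1\<close> gives
  \<open>|S(1+t)|\<^sup>2 \<ge> (1 + (1+\<epsilon>)t)\<^bsup>2n\<^esup>\<close> for some \<open>\<epsilon> > 0\<close>. But the growth hypothesis gives
  \<open>|S(1+t)|\<^sup>2 = |P(1+t)|\<^sup>4 \<le> ((1 + (1+t)\<^sup>n)/2)\<^sup>4\<close>, whose derivative at \<open>t = 0\<close> is only \<open>2n\<close>.
\<close>

definition qnorm_sq :: "quat \<Rightarrow> real" where
  "qnorm_sq q = (Defs.Re q)^2 + (Im1 q)^2 + (Im2 q)^2 + (Im3 q)^2"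

definition qinner :: "quat \<Rightarrow> quat \<Rightarrow> real" where
  "qinner p q = Defs.Re p * Defs.Re q + Im1 p * Im1 q + Im2 p * Im2 q + Im3 p * Im3 q"

definition qconj :: "quat \<Rightarrow> quat" where
  "qconj q = Quat (Defs.Re q) (- Im1 q) (- Im2 q) (- Im3 q)"

definition qscale :: "real \<Rightarrow> quat \<Rightarrow> quat" where
  "qscale c q = Quat (c * Defs.Re q) (c * Im1 q) (c * Im2 q) (c * Im3 q)"

definition qlincomb :: "(nat \<Rightarrow> real) \<Rightarrow> (nat \<Rightarrow> quat) \<Rightarrow> nat \<Rightarrow> quat" where
  "qlincomb c a k = Quat (\<Sum>j\<le>k. c j * Defs.Re (a j)) (\<Sum>j\<le>k. c j * Im1 (a j))
     (\<Sum>j\<le>k. c j * Im2 (a j)) (\<Sum>j\<le>k. c j * Im3 (a j))"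

lemma qnorm_nonneg: "qnorm q \<ge> 0"
  by (simp add: qnorm_def)

lemma qnorm_sq_eq_qnorm_power2: "qnorm_sq q = (qnorm q)^2"
  by (simp add: qnorm_def qnorm_sq_def)

lemma qnorm_sq_eq_0_iff: "qnorm_sq q = 0 \<longleftrightarrow> q = qzero"
  by (cases q) (auto simp: qnorm_sq_def qzero_def add_nonneg_eq_0_iff)

lemma qinner_self: "qinner q q = qnorm_sq q"
  by (simp add: qinner_def qnorm_sq_def power2_eq_square)

lemma qinner_commute: "qinner p q = qinner q p"
  by (simp add: qinner_def algebra_simps)

lemma qnorm_sq_qmul: "qnorm_sq (qmul p q) = qnorm_sq p * qnorm_sq q"
  by (simp add: qnorm_sq_def qmul_def power2_eq_square algebra_simps)

lemma qnorm_sq_qscale: "qnorm_sq (qscale c q) = c^2 * qnorm_sq q"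
  by (simp add: qnorm_sq_def qscale_def power2_eq_square algebra_simps)

lemma qnorm_sq_qconj: "qnorm_sq (qconj q) = qnorm_sq q"
  by (simp add: qnorm_sq_def qconj_def)

lemma qmul_qscale_left: "qmul (qscale c p) q = qscale c (qmul p q)"
  by (simp add: qmul_def qscale_def algebra_simps)

lemma qmul_qconj_qmul: "qmul (qmul p (qconj q)) q = qscale (qnorm_sq q) p"
  by (simp add: qmul_def qconj_def qscale_def qnorm_sq_def power2_eq_square algebra_simps)

lemma qinner_qlincomb:
  "qinner (qlincomb f a k) (qlincomb g a k) = (\<Sum>j\<le>k. \<Sum>i\<le>k. f j * g i * qinner (a j) (a i))"
  by (simp add: qlincomb_def qinner_def sum_product sum.distrib[symmetric] algebra_simps)

text \<open>
  On the 2-sphere \<open>{Re q = u, |q|\<^sup>2 = r}\<close> we have \<open>q\<^sup>2 = 2uq - r\<close>, hence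
  \<open>q\<^sup>j = \<alpha>\<^sub>j + \<beta>\<^sub>j q\<close> where \<open>(\<alpha>\<^sub>j, \<beta>\<^sub>j) = sphere_coeffs u r j\<close>; the same holds for complex \<open>z\<close>
  with \<open>u = Re z\<close> and \<open>r = |z|\<^sup>2\<close>.
\<close>
fun sphere_coeffs :: "real \<Rightarrow> real \<Rightarrow> nat \<Rightarrow> real \<times> real" where
  "sphere_coeffs u r 0 = (1, 0)"
| "sphere_coeffs u r (Suc j) =
     (- r * snd (sphere_coeffs u r j), fst (sphere_coeffs u r j) + 2 * u * snd (sphere_coeffs u r j))"

abbreviation sphere_const :: "real \<Rightarrow> real \<Rightarrow> (nat \<Rightarrow> quat) \<Rightarrow> nat \<Rightarrow> quat" where
  "sphere_const u r a k \<equiv> qlincomb (\<lambda>j. fst (sphere_coeffs u r j)) a k"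

abbreviation sphere_slope :: "real \<Rightarrow> real \<Rightarrow> (nat \<Rightarrow> quat) \<Rightarrow> nat \<Rightarrow> quat" where
  "sphere_slope u r a k \<equiv> qlincomb (\<lambda>j. snd (sphere_coeffs u r j)) a k"

lemma qpow_sphere_coeffs:
  "qpow q j = qadd (Quat (fst (sphere_coeffs (Defs.Re q) (qnorm_sq q) j)) 0 0 0)
     (qscale (snd (sphere_coeffs (Defs.Re q) (qnorm_sq q) j)) q)"
  by (induction j)
     (simp_all add: qone_def qadd_def qscale_def qmul_def qnorm_sq_def algebra_simps power2_eq_square)

lemma cpow_sphere_coeffs:
  fixes z :: complex
  shows "z ^ j = of_real (fst (sphere_coeffs (Complex.Re z) ((cmod z)^2) j))
     + of_real (snd (sphere_coeffs (Complex.Re z) ((cmod z)^2) j)) * z"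
proof (induction j)
  case (Suc j)
  have z_sq: "z * z = 2 * of_real (Complex.Re z) * z - of_real ((cmod z)^2)"
    unfolding cmod_power2 by (simp add: complex_eq_iff power2_eq_square algebra_simps)
  have "z ^ Suc j = of_real (fst (sphere_coeffs (Complex.Re z) ((cmod z)^2) j)) * z
     + of_real (snd (sphere_coeffs (Complex.Re z) ((cmod z)^2) j)) * (z * z)"
    using Suc by (simp add: algebra_simps)
  then show ?case
    unfolding z_sq by (simp add: algebra_simps)
qed simp

lemma qpoly_aux_sphere:
  "qpoly_aux a k q = qadd (sphere_const (Defs.Re q) (qnorm_sq q) a k)
     (qmul q (sphere_slope (Defs.Re q) (qnorm_sq q) a k))"
proof (induction k)
  case (Suc k)
  show ?case
    unfolding qpoly_aux.simps Suc qpow_sphere_coeffs[of q "Suc k"]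
    by (simp add: qlincomb_def qadd_def qscale_def qmul_def algebra_simps)
qed (simp add: qlincomb_def qadd_def qmul_def qone_def)

text \<open>
  The symmetrization \<open>P \<cdot> P\<^sup>c\<close> of \<open>P\<close>; its coefficients \<open>\<Sum>\<^sub>j\<^sub>+\<^sub>k\<^sub>=\<^sub>m a\<^sub>j \<bar>a\<^sub>k\<close> are the real numbers
  \<open>\<Sum>\<^sub>j\<^sub>+\<^sub>k\<^sub>=\<^sub>m \<langle>a\<^sub>j, a\<^sub>k\<rangle>\<close>, so it is a complex polynomial.
\<close>
definition qpoly_sym :: "(nat \<Rightarrow> quat) \<Rightarrow> nat \<Rightarrow> complex poly" where
  "qpoly_sym a n = (\<Sum>j\<le>n. \<Sum>k\<le>n. monom (of_real (qinner (a j) (a k))) (j + k))"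

lemma poly_qpoly_sym:
  "poly (qpoly_sym a n) z = (\<Sum>j\<le>n. \<Sum>k\<le>n. of_real (qinner (a j) (a k)) * (z ^ j * z ^ k))"
  by (simp add: qpoly_sym_def poly_sum poly_monom power_add)

lemma poly_qpoly_sym_sphere:
  fixes z :: complex and a :: "nat \<Rightarrow> quat" and n :: nat
  defines "A \<equiv> sphere_const (Complex.Re z) ((cmod z)^2) a n"
    and "B \<equiv> sphere_slope (Complex.Re z) ((cmod z)^2) a n"
  shows "poly (qpoly_sym a n) z
    = of_real (qnorm_sq A) + 2 * z * of_real (qinner A B) + z^2 * of_real (qnorm_sq B)"
proof -
  define x where "x j = complex_of_real (fst (sphere_coeffs (Complex.Re z) ((cmod z)^2) j))" for j
  define y where "y j = complex_of_real (snd (sphere_coeffs (Complex.Re z) ((cmod z)^2) j))" for j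
  define c where "c j k = complex_of_real (qinner (a j) (a k))" for j k
  have pow: "z ^ j = x j + y j * z" for j
    unfolding x_def y_def by (rule cpow_sphere_coeffs)
  have "poly (qpoly_sym a n) z = (\<Sum>j\<le>n. \<Sum>k\<le>n. c j k * ((x j + y j * z) * (x k + y k * z)))"
    by (simp add: poly_qpoly_sym c_def pow)
  also have "\<dots> = (\<Sum>j\<le>n. \<Sum>k\<le>n. x j * x k * c j k)
      + z * ((\<Sum>j\<le>n. \<Sum>k\<le>n. x j * y k * c j k) + (\<Sum>j\<le>n. \<Sum>k\<le>n. y j * x k * c j k))
      + z^2 * (\<Sum>j\<le>n. \<Sum>k\<le>n. y j * y k * c j k)"
    by (simp add: sum_distrib_left sum.distrib[symmetric] algebra_simps power2_eq_square)
  also have "(\<Sum>j\<le>n. \<Sum>k\<le>n. y j * x k * c j k) = (\<Sum>j\<le>n. \<Sum>k\<le>n. x j * y k * c j k)"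
    by (subst sum.swap) (simp add: c_def qinner_commute mult.commute)
  finally show ?thesis
    by (simp add: A_def B_def qinner_qlincomb x_def y_def c_def flip: qinner_self)
qed

lemma poly_qpoly_sym_of_real:
  "poly (qpoly_sym a n) (of_real x) = of_real (qnorm_sq (qpoly a n (Quat x 0 0 0)))"
proof -
  define A where "A = sphere_const x (x^2) a n"
  define B where "B = sphere_slope x (x^2) a n"
  have "qpoly a n (Quat x 0 0 0) = qadd A (qmul (Quat x 0 0 0) B)"
    by (simp add: qpoly_def qpoly_aux_sphere A_def B_def qnorm_sq_def)
  moreover have "poly (qpoly_sym a n) (of_real x)
      = of_real (qnorm_sq A + 2 * x * qinner A B + x^2 * qnorm_sq B)"
    by (simp add: poly_qpoly_sym_sphere A_def B_def)
  ultimately show ?thesis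
    by (simp add: qnorm_sq_def qinner_def qadd_def qmul_def power2_eq_square algebra_simps)
qed

lemma degree_qpoly_sym:
  assumes "a n \<noteq> qzero"
  shows "degree (qpoly_sym a n) = 2 * n"
proof (rule antisym)
  have "degree (monom (of_real (qinner (a j) (a k))) (j + k) :: complex poly) \<le> 2 * n"
    if "j \<le> n" "k \<le> n" for j k
    using that degree_monom_le[of "complex_of_real (qinner (a j) (a k))" "j + k"] by linarith
  then show "degree (qpoly_sym a n) \<le> 2 * n"
    unfolding qpoly_sym_def by (intro degree_sum_le) auto
  have "coeff (qpoly_sym a n) (2 * n)
      = (\<Sum>j\<le>n. \<Sum>k\<le>n. if j = n \<and> k = n then of_real (qinner (a j) (a k)) else 0)"
    unfolding qpoly_sym_def coeff_sum coeff_monom by (intro sum.cong refl) auto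
  also have "\<dots> = (\<Sum>j\<le>n. if j = n then of_real (qinner (a n) (a n)) else 0)"
    by (intro sum.cong refl) auto
  also have "\<dots> = of_real (qnorm_sq (a n))"
    by (simp add: qinner_self)
  finally show "2 * n \<le> degree (qpoly_sym a n)"
    using assms by (intro le_degree) (simp add: qnorm_sq_eq_0_iff)
qed

lemma quat_root_of_sym_quadratic:
  fixes z :: complex
  assumes "of_real (qnorm_sq A) + 2 * z * of_real (qinner A B) + z^2 * of_real (qnorm_sq B) = 0"
  shows "\<exists>q. Defs.Re q = Complex.Re z \<and> qnorm_sq q = (cmod z)^2 \<and> qadd A (qmul q B) = qzero"
proof -
  define u where "u = Complex.Re z"
  define v where "v = Complex.Im z"
  have r: "(cmod z)^2 = u^2 + v^2"
    by (simp add: u_def v_def cmod_power2)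
  have "z = Complex u v"
    by (simp add: u_def v_def)
  with assms have re: "qnorm_sq A + 2 * u * qinner A B + (u^2 - v^2) * qnorm_sq B = 0"
    and im: "v * (qinner A B + u * qnorm_sq B) = 0"
    by (simp_all add: complex_eq_iff power2_eq_square algebra_simps)
  consider "v = 0" | "v \<noteq> 0" "B = qzero" | "v \<noteq> 0" "B \<noteq> qzero"
    by blast
  then show ?thesis
  proof cases
    case 1
    have "qnorm_sq (qadd A (qmul (Quat u 0 0 0) B)) = qnorm_sq A + 2 * u * qinner A B + u^2 * qnorm_sq B"
      by (simp add: qnorm_sq_def qinner_def qadd_def qmul_def power2_eq_square algebra_simps)
    also have "\<dots> = 0"
      using 1 re by simp
    finally have "qadd A (qmul (Quat u 0 0 0) B) = qzero"
      by (simp add: qnorm_sq_eq_0_iff)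
    with 1 r show ?thesis
      by (intro exI[of _ "Quat u 0 0 0"]) (simp add: u_def qnorm_sq_def)
  next
    case 2
    then have "qnorm_sq B = 0" "qinner A B = 0"
      by (simp_all add: qzero_def qnorm_sq_def qinner_def)
    with re have "A = qzero"
      by (simp add: qnorm_sq_eq_0_iff)
    with 2 r show ?thesis
      by (intro exI[of _ "Quat u v 0 0"]) (simp add: u_def qnorm_sq_def qadd_def qmul_def qzero_def)
  next
    case 3
    \<comment> \<open>the quaternion \<open>-A B\<^sup>-\<^sup>1\<close> lies on the sphere of \<open>z\<close>\<close>
    have B: "qnorm_sq B \<noteq> 0"
      using 3 by (simp add: qnorm_sq_eq_0_iff)
    have "qinner A B + u * qnorm_sq B = 0"
      using im 3(1) by simp
    then have AB: "qinner A B = - u * qnorm_sq B"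
      by linarith
    have AA: "qnorm_sq A = (u^2 + v^2) * qnorm_sq B"
      using re AB by (simp add: algebra_simps power2_eq_square)
    define q where "q = qscale (- 1 / qnorm_sq B) (qmul A (qconj B))"
    have "Defs.Re q = u"
      using AB B by (simp add: q_def qscale_def qmul_def qconj_def qinner_def qnorm_sq_def field_simps)
    moreover have "qnorm_sq q = (cmod z)^2"
      using AA B r by (simp add: q_def qnorm_sq_qscale qnorm_sq_qmul qnorm_sq_qconj power2_eq_square)
    moreover have "qmul q B = qscale (- 1) A"
      using B unfolding q_def qmul_qscale_left qmul_qconj_qmul by (simp add: qscale_def)
    ultimately show ?thesis
      by (intro exI[of _ q]) (simp add: u_def qadd_def qscale_def qzero_def)
  qed
qed

lemma qpoly_zero_of_qpoly_sym_root:
  assumes "poly (qpoly_sym a n) z = 0"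
  shows "\<exists>q. qpoly a n q = qzero \<and> qnorm q = cmod z"
proof -
  obtain q where "Defs.Re q = Complex.Re z" "qnorm_sq q = (cmod z)^2"
    and "qadd (sphere_const (Complex.Re z) ((cmod z)^2) a n)
          (qmul q (sphere_slope (Complex.Re z) ((cmod z)^2) a n)) = qzero"
    using quat_root_of_sym_quadratic assms unfolding poly_qpoly_sym_sphere by blast
  then show ?thesis
    by (intro exI[of _ q])
       (simp add: qpoly_def qpoly_aux_sphere qnorm_sq_eq_qnorm_power2 power2_eq_iff_nonneg qnorm_nonneg)
qed

definition grows_right_of_one :: "real \<Rightarrow> nat \<Rightarrow> (complex \<Rightarrow> complex) \<Rightarrow> bool" where
  "grows_right_of_one \<epsilon> m f \<longleftrightarrow>
     (\<forall>t\<ge>0. (cmod (f 1))^2 * (1 + (1 + \<epsilon>) * t)^m \<le> (cmod (f (of_real (1 + t))))^2)"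

lemma grows_right_of_one_mono:
  assumes "grows_right_of_one \<epsilon> m f" "0 \<le> \<epsilon>'" "\<epsilon>' \<le> \<epsilon>"
  shows "grows_right_of_one \<epsilon>' m f"
  unfolding grows_right_of_one_def
proof (intro allI impI)
  fix t :: real
  assume "t \<ge> 0"
  then have "(1 + (1 + \<epsilon>') * t)^m \<le> (1 + (1 + \<epsilon>) * t)^m"
    using assms(2,3) by (intro power_mono) (auto intro: mult_right_mono)
  then show "(cmod (f 1))^2 * (1 + (1 + \<epsilon>') * t)^m \<le> (cmod (f (of_real (1 + t))))^2"
    using assms(1) \<open>t \<ge> 0\<close> unfolding grows_right_of_one_def
    by (meson mult_left_mono order.trans zero_le_power2)
qed

lemma grows_right_of_one_mult:
  assumes "grows_right_of_one \<epsilon> m f" "grows_right_of_one \<epsilon> k g" "\<epsilon> \<ge> 0"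
  shows "grows_right_of_one \<epsilon> (m + k) (\<lambda>z. f z * g z)"
  unfolding grows_right_of_one_def
proof (intro allI impI)
  fix t :: real
  assume "t \<ge> 0"
  have "(cmod (f 1 * g 1))^2 * (1 + (1 + \<epsilon>) * t)^(m + k)
      = ((cmod (f 1))^2 * (1 + (1 + \<epsilon>) * t)^m) * ((cmod (g 1))^2 * (1 + (1 + \<epsilon>) * t)^k)"
    by (simp add: norm_mult power_mult_distrib power_add)
  also have "\<dots> \<le> (cmod (f (of_real (1 + t))))^2 * (cmod (g (of_real (1 + t))))^2"
    using assms \<open>t \<ge> 0\<close> unfolding grows_right_of_one_def by (intro mult_mono) auto
  also have "\<dots> = (cmod (f (of_real (1 + t)) * g (of_real (1 + t))))^2"
    by (simp add: norm_mult power_mult_distrib)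
  finally show "(cmod (f 1 * g 1))^2 * (1 + (1 + \<epsilon>) * t)^(m + k)
      \<le> (cmod (f (of_real (1 + t)) * g (of_real (1 + t))))^2" .
qed

text \<open>
  For \<open>|z| < 1\<close> one has \<open>2 Re (1 - z) > |1 - z|\<^sup>2\<close>, and
  \<open>|1 + t - z|\<^sup>2 = |1 - z|\<^sup>2 + 2 Re (1 - z) t + t\<^sup>2\<close>.
\<close>
lemma grows_right_of_one_linear_factor:
  fixes z :: complex
  assumes "cmod z < 1"
  shows "\<exists>\<epsilon>>0. grows_right_of_one \<epsilon> 1 (\<lambda>w. w - z)"
proof (intro exI conjI)
  define \<epsilon> where "\<epsilon> = 2 * Complex.Re (1 - z) / (cmod (1 - z))^2 - 1"
  have norm_sq: "(cmod (1 - z))^2 = (1 - Complex.Re z)^2 + (Im z)^2"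
    by (simp add: cmod_power2)
  have "(Complex.Re z)^2 + (Im z)^2 < 1"
    using assms by (metis cmod_power2 norm_ge_zero power_less_one_iff zero_less_numeral)
  then have gt: "2 * Complex.Re (1 - z) > (cmod (1 - z))^2"
    unfolding norm_sq by (simp add: power2_eq_square algebra_simps)
  have pos: "(cmod (1 - z))^2 > 0"
    using assms by auto
  show "\<epsilon> > 0"
    unfolding \<epsilon>_def using gt pos by (simp add: field_simps)
  show "grows_right_of_one \<epsilon> 1 (\<lambda>w. w - z)"
    unfolding grows_right_of_one_def
  proof (intro allI impI)
    fix t :: real
    assume "t \<ge> 0"
    have "(cmod (1 - z))^2 * (1 + (1 + \<epsilon>) * t)^1 = (cmod (1 - z))^2 + 2 * Complex.Re (1 - z) * t"
      unfolding \<epsilon>_def using pos by (simp add: field_simps)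
    also have "\<dots> \<le> (cmod (1 - z))^2 + 2 * Complex.Re (1 - z) * t + t^2"
      by simp
    also have "\<dots> = (cmod (of_real (1 + t) - z))^2"
      unfolding norm_sq cmod_power2 by (simp add: power2_eq_square algebra_simps)
    finally show "(cmod (1 - z))^2 * (1 + (1 + \<epsilon>) * t)^1 \<le> (cmod (of_real (1 + t) - z))^2" .
  qed
qed

lemma poly_grows_right_of_one:
  fixes p :: "complex poly"
  assumes "p \<noteq> 0" and roots: "\<And>z. poly p z = 0 \<Longrightarrow> cmod z < 1"
  shows "\<exists>\<epsilon>>0. grows_right_of_one \<epsilon> (degree p) (poly p)"
  using assms
proof (induction "degree p" arbitrary: p)
  case 0
  then show ?case
    by (intro exI[of _ 1]) (auto simp: grows_right_of_one_def elim: degree_eq_zeroE)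
next
  case (Suc m)
  then obtain z where "poly p z = 0"
    using fundamental_theorem_of_algebra constant_degree by (metis nat.distinct(1))
  then obtain q where p: "p = [:-z, 1:] * q" and "cmod z < 1"
    using Suc.prems(2) by (meson dvdE poly_eq_0_iff_dvd)
  have "q \<noteq> 0"
    using Suc.prems(1) p by auto
  then have "degree p = degree [:-z, 1:] + degree q"
    unfolding p by (intro degree_mult_eq) auto
  then have "degree q = m"
    using Suc.hyps(2) by simp
  moreover have "\<And>w. poly q w = 0 \<Longrightarrow> cmod w < 1"
    using Suc.prems(2) p by simp
  ultimately have "\<exists>\<epsilon>>0. grows_right_of_one \<epsilon> m (poly q)"
    using Suc.hyps(1)[of q] \<open>q \<noteq> 0\<close> by simp
  then obtain \<epsilon>1 where "\<epsilon>1 > 0" and q_grows: "grows_right_of_one \<epsilon>1 m (poly q)"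
    by blast
  obtain \<epsilon>2 where "\<epsilon>2 > 0" and factor_grows: "grows_right_of_one \<epsilon>2 1 (\<lambda>w. w - z)"
    using grows_right_of_one_linear_factor \<open>cmod z < 1\<close> by blast
  define \<epsilon> where "\<epsilon> = min \<epsilon>1 \<epsilon>2"
  have "grows_right_of_one \<epsilon> (1 + m) (\<lambda>w. (w - z) * poly q w)"
  proof (rule grows_right_of_one_mult)
    show "grows_right_of_one \<epsilon> 1 (\<lambda>w. w - z)" "grows_right_of_one \<epsilon> m (poly q)"
      using grows_right_of_one_mono[OF factor_grows] grows_right_of_one_mono[OF q_grows]
        \<open>\<epsilon>1 > 0\<close> \<open>\<epsilon>2 > 0\<close> by (simp_all add: \<epsilon>_def)
  qed (use \<open>\<epsilon>1 > 0\<close> \<open>\<epsilon>2 > 0\<close> in \<open>simp add: \<epsilon>_def\<close>)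
  moreover have "poly p = (\<lambda>w. (w - z) * poly q w)"
    unfolding p by (auto simp: algebra_simps)
  ultimately show ?case
    using Suc.hyps(2) \<open>\<epsilon>1 > 0\<close> \<open>\<epsilon>2 > 0\<close> by (intro exI[of _ \<epsilon>]) (simp add: \<epsilon>_def)
qed

definition quat_of_vec :: "(real \<times> real) \<times> (real \<times> real) \<Rightarrow> quat" where
  "quat_of_vec x = Quat (fst (fst x)) (snd (fst x)) (fst (snd x)) (snd (snd x))"

definition continuous_quat :: "((real \<times> real) \<times> (real \<times> real) \<Rightarrow> quat) \<Rightarrow> bool" where
  "continuous_quat f \<longleftrightarrow> continuous_on UNIV (\<lambda>x. Defs.Re (f x)) \<and> continuous_on UNIV (\<lambda>x. Im1 (f x))
     \<and> continuous_on UNIV (\<lambda>x. Im2 (f x)) \<and> continuous_on UNIV (\<lambda>x. Im3 (f x))"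

lemma continuous_quat_quat_of_vec: "continuous_quat quat_of_vec"
  unfolding continuous_quat_def quat_of_vec_def by (auto intro!: continuous_intros)

lemma continuous_quat_const: "continuous_quat (\<lambda>x. c)"
  unfolding continuous_quat_def by auto

lemma continuous_quat_qadd:
  "continuous_quat f \<Longrightarrow> continuous_quat g \<Longrightarrow> continuous_quat (\<lambda>x. qadd (f x) (g x))"
  unfolding continuous_quat_def qadd_def by (auto intro!: continuous_intros)

lemma continuous_quat_qmul:
  "continuous_quat f \<Longrightarrow> continuous_quat g \<Longrightarrow> continuous_quat (\<lambda>x. qmul (f x) (g x))"
  unfolding continuous_quat_def qmul_def by (auto intro!: continuous_intros)

lemma continuous_quat_qpow: "continuous_quat (\<lambda>x. qpow (f x) k)" if "continuous_quat f"
  by (induction k) (auto simp: continuous_quat_const that intro!: continuous_quat_qmul)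

lemma continuous_quat_qpoly_aux: "continuous_quat (\<lambda>x. qpoly_aux a k (quat_of_vec x))"
  by (induction k)
     (auto simp: continuous_quat_const continuous_quat_quat_of_vec
       intro!: continuous_quat_qadd continuous_quat_qmul continuous_quat_qpow)

lemma norm_eq_qnorm_quat_of_vec: "norm x = qnorm (quat_of_vec x)"
  by (cases x) (auto simp: quat_of_vec_def qnorm_def norm_Pair add.assoc)

lemma qnorm_qpoly_le_Greatest_sphere:
  assumes "qnorm q = R"
  shows "qnorm (qpoly a n q) \<le> (GREATEST r. \<exists>q. qnorm q = R \<and> r = qnorm (qpoly a n q))"
proof -
  have "continuous_on (sphere 0 R) (\<lambda>x. qnorm (qpoly a n (quat_of_vec x)))"
    using continuous_quat_qpoly_aux[of a n] unfolding continuous_quat_def qpoly_def qnorm_def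
    by (auto intro!: continuous_intros elim: continuous_on_subset)
  moreover have "sphere (0 :: (real \<times> real) \<times> (real \<times> real)) R \<noteq> {}"
    using assms qnorm_nonneg[of q] by auto
  ultimately obtain x where "x \<in> sphere 0 R"
    and x_max: "\<forall>y\<in>sphere 0 R. qnorm (qpoly a n (quat_of_vec y)) \<le> qnorm (qpoly a n (quat_of_vec x))"
    using continuous_attains_sup[OF compact_sphere] by blast
  have sphere: "qnorm p = R \<longleftrightarrow> (\<exists>y\<in>sphere 0 R. p = quat_of_vec y)" for p
    by (cases p) (auto simp: norm_eq_qnorm_quat_of_vec quat_of_vec_def
        intro!: bexI[of _ "((Defs.Re p, Im1 p), (Im2 p, Im3 p))"])
  have "(GREATEST r. \<exists>q. qnorm q = R \<and> r = qnorm (qpoly a n q)) = qnorm (qpoly a n (quat_of_vec x))"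
    using x_max \<open>x \<in> sphere 0 R\<close> unfolding sphere
    by (intro Greatest_equality) (auto intro!: exI[of _ "quat_of_vec x"])
  then show ?thesis
    using x_max assms unfolding sphere by auto
qed

lemma norm_qpoly_sym_of_real_le:
  assumes "R \<ge> 0" and "(GREATEST r. \<exists>q. qnorm q = R \<and> r = qnorm (qpoly a n q)) \<le> c"
  shows "cmod (poly (qpoly_sym a n) (of_real R)) \<le> c^2"
proof -
  have "qnorm (Quat R 0 0 0) = R"
    using assms(1) by (simp add: qnorm_def)
  then have "qnorm (qpoly a n (Quat R 0 0 0)) \<le> c"
    using assms(2) by (blast intro: order.trans qnorm_qpoly_le_Greatest_sphere)
  then have "(qnorm (qpoly a n (Quat R 0 0 0)))^2 \<le> c^2"
    by (intro power_mono qnorm_nonneg)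
  then show ?thesis
    by (simp add: poly_qpoly_sym_of_real qnorm_sq_eq_qnorm_power2 norm_power)
qed

lemma power_bound_fails_near_zero:
  fixes \<epsilon> \<eta> :: real
  assumes "\<epsilon> > 0" "\<eta> > 0" "n \<ge> 1"
  shows "\<exists>t. 0 < t \<and> t < \<eta> \<and> ((1 + (1 + t)^n) / 2)^4 < (1 + (1 + \<epsilon>) * t)^(2 * n)"
proof -
  define f where "f t = (1 + (1 + \<epsilon>) * t)^(2 * n) - ((1 + (1 + t)^n) / 2)^4" for t :: real
  have "DERIV f 0 :> 2 * real n * \<epsilon>"
    unfolding f_def by (rule derivative_eq_intros refl | simp add: algebra_simps)+
  moreover have "2 * real n * \<epsilon> > 0"
    using assms by simp
  ultimately obtain d where "d > 0" and f_inc: "\<And>h. 0 < h \<Longrightarrow> h < d \<Longrightarrow> f 0 < f h"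
    using DERIV_pos_inc_right by force
  define t where "t = min d \<eta> / 2"
  have "0 < t" "t < d" "t < \<eta>"
    using \<open>d > 0\<close> assms(2) by (auto simp: t_def)
  moreover have "f 0 = 0"
    by (simp add: f_def)
  ultimately show ?thesis
    using f_inc[of t] by (intro exI[of _ t]) (simp add: f_def)
qed

theorem theorem3p2:
  fixes a :: "nat \<Rightarrow> quat" and n :: nat
  assumes deg: "n \<ge> 1" and lead: "a n \<noteq> qzero"
    and P1: "qpoly a n qone = qone"
    and normP: "(GREATEST r. \<exists>q. qnorm q \<le> 1 \<and> r = qnorm (qpoly a n q)) = 1"
    and growth: "\<exists>\<delta>::real. \<delta> > 1 \<and> (\<forall>R. 1 < R \<and> R < \<delta> \<longrightarrow>
         (GREATEST r. \<exists>q. qnorm q = R \<and> r = qnorm (qpoly a n q)) \<le> (1 + R ^ n) / 2)"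
  shows "\<exists>q0. qpoly a n q0 = qzero \<and> qnorm q0 \<ge> 1"
proof (rule ccontr)
  assume no_outer_zero: "\<not> (\<exists>q0. qpoly a n q0 = qzero \<and> qnorm q0 \<ge> 1)"
  obtain \<delta> :: real where "\<delta> > 1" and sphere_bound: "\<And>R. 1 < R \<Longrightarrow> R < \<delta> \<Longrightarrow>
      (GREATEST r. \<exists>q. qnorm q = R \<and> r = qnorm (qpoly a n q)) \<le> (1 + R ^ n) / 2"
    using growth by blast
  let ?S = "qpoly_sym a n"
  have "?S \<noteq> 0" "degree ?S = 2 * n"
    using degree_qpoly_sym[of a n] lead deg by auto
  moreover have "cmod z < 1" if "poly ?S z = 0" for z
    using qpoly_zero_of_qpoly_sym_root[OF that] no_outer_zero by force
  ultimately obtain \<epsilon> where "\<epsilon> > 0" and S_grows: "grows_right_of_one \<epsilon> (2 * n) (poly ?S)"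
    using poly_grows_right_of_one by metis
  have "poly ?S 1 = 1"
    using poly_qpoly_sym_of_real[of a n 1] P1 by (simp add: qone_def qnorm_sq_def)
  have "(1 + (1 + \<epsilon>) * t)^(2 * n) \<le> ((1 + (1 + t)^n) / 2)^4" if "0 < t" "t < \<delta> - 1" for t
  proof -
    have "(1 + (1 + \<epsilon>) * t)^(2 * n) \<le> (cmod (poly ?S (of_real (1 + t))))^2"
      using S_grows \<open>poly ?S 1 = 1\<close> that unfolding grows_right_of_one_def by force
    also have "\<dots> \<le> (((1 + (1 + t)^n) / 2)^2)^2"
      using that by (intro power_mono norm_qpoly_sym_of_real_le sphere_bound) auto
    finally show ?thesis
      by (simp flip: power_mult)
  qed
  then show False
    using power_bound_fails_near_zero[of \<epsilon> "\<delta> - 1" n] \<open>\<epsilon> > 0\<close> \<open>\<delta> > 1\<close> deg by force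
qed

end
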